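(* Let $\mathcal V,\mathcal W$ be operator spaces and $\Omega\subseteq\mathcal V_{\mathrm{nc}}$ a uniformly open nc set. For a nc function $f:\Omega\to\mathcal W_{\mathrm{nc}}$ the following are equivalent: $f$ is uniformly locally bounded; $f$ is continuous with respect to the uniformly-open topologies on $\mathcal V_{\mathrm{nc}}$ and $\mathcal W_{\mathrm{nc}}$; $f$ is uniformly analytic.
   Context: An operator space is a complex Banach space $\mathcal V$ with norms $\|\cdot\|_n$ on $\mathcal V^{n\times n}$ such that $\|X\oplus Y\|_{n+m}=\max\{\|X\|_n,\|Y\|_m\}$ and $\|TXS\|_n\le\|T\|\|X\|_n\|S\|$ for $T,S\in\mathbb C^{n\times n}$, where $X\oplus Y=\begin{bmatrix}X&0\\0&Y\end{bmatrix}$. $\mathcal V_{\mathrm{nc}}=\coprod_n\mathcal V^{n\times n}$. For $Y\in\mathcal V^{s\times s}$, $r>0$, $B_{\mathrm{nc}}(Y,r)=\coprod_m\{X\in\mathcal V^{sm\times sm}:\|X-\bigoplus_{\alpha=1}^mY\|_{sm}<r\}$; nc balls form a base of a topology on $\mathcal V_{\mathrm{nc}}$, the uniformly-open topology (its open sets are uniformly open). A nc set is closed under direct sums, $\Omega_n=\Omega\cap\mathcal V^{n\times n}$; a nc function satisfies $f(\Omega_n)\subseteq\mathcal W^{n\times n}$, $f(X\oplus Y)=f(X)\oplus f(Y)$, $f(SXS^{-1})=Sf(X)S^{-1}$ for invertible $S\in\mathbb C^{n\times n}$ with $X,SXS^{-1}\in\Omega_n$. $f$ is uniformly locally bounded if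 for every $s$ and $Y\in\Omega_s$ there is $r>0$ with $B_{\mathrm{nc}}(Y,r)\subseteq\Omega$ and $\sup\{\|f(X)\|_{sm}:m\in\mathbb N,X\in B_{\mathrm{nc}}(Y,r)\cap\mathcal V^{sm\times sm}\}<\infty$. $f$ is G-differentiable if for all $n$, $X\in\Omega_n$, $Z\in\mathcal V^{n\times n}$, $\lim_{t\to0}(f(X+tZ)-f(X))/t$ exists in $\mathcal W^{n\times n}$; $f$ is uniformly analytic if it is uniformly locally bounded and G-differentiable. *)

theory Defs
  imports "HOL-Analysis.Analysis"
begin

class complex_vector = real_vector +
  fixes scaleC :: "complex \<Rightarrow> 'a \<Rightarrow> 'a"  (infixr \<open>*\<^sub>C\<close> 75)
  assumes scaleR_scaleC: "scaleR r = scaleC (complex_of_real r)"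
    and scaleC_add_right: "scaleC a (x + y) = scaleC a x + scaleC a y"
    and scaleC_add_left: "scaleC (a + b) x = scaleC a x + scaleC b x"
    and scaleC_scaleC: "scaleC a (scaleC b x) = scaleC (a * b) x"
    and scaleC_one: "scaleC 1 x = x"

class complex_normed_vector = complex_vector + real_normed_vector +
  assumes norm_scaleC: "norm (scaleC a x) = cmod a * norm x"

text \<open>Matrices of size n over a type are represented as functions nat => nat => 'a
  that vanish outside the index block {0..<n} x {0..<n}.\<close>

definition mats :: "nat \<Rightarrow> (nat \<Rightarrow> nat \<Rightarrow> 'a::zero) set" where
  "mats n = {X. \<forall>i j. (n \<le> i \<or> n \<le> j) \<longrightarrow> X i j = 0}"

definition ncspace :: "(nat \<times> (nat \<Rightarrow> nat \<Rightarrow> 'a::zero)) set" where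
  "ncspace = {(n, X). 1 \<le> n \<and> X \<in> mats n}"

definition dsum :: "nat \<Rightarrow> nat \<Rightarrow> (nat \<Rightarrow> nat \<Rightarrow> 'a::zero) \<Rightarrow> (nat \<Rightarrow> nat \<Rightarrow> 'a)
    \<Rightarrow> nat \<Rightarrow> nat \<Rightarrow> 'a" where
  "dsum n m X Y = (\<lambda>i j. if i < n \<and> j < n then X i j
      else if n \<le> i \<and> n \<le> j \<and> i < n + m \<and> j < n + m then Y (i - n) (j - n) else 0)"

definition dsum_rep :: "nat \<Rightarrow> nat \<Rightarrow> (nat \<Rightarrow> nat \<Rightarrow> 'a::zero) \<Rightarrow> nat \<Rightarrow> nat \<Rightarrow> 'a" where
  "dsum_rep s m Y = (\<lambda>i j. if i div s = j div s \<and> i < s * m \<and> j < s * m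
      then Y (i mod s) (j mod s) else 0)"

definition cmat_mult :: "nat \<Rightarrow> (nat \<Rightarrow> nat \<Rightarrow> complex) \<Rightarrow> (nat \<Rightarrow> nat \<Rightarrow> complex)
    \<Rightarrow> nat \<Rightarrow> nat \<Rightarrow> complex" where
  "cmat_mult n A B = (\<lambda>i j. if i < n \<and> j < n then (\<Sum>k<n. A i k * B k j) else 0)"

definition cmat_id :: "nat \<Rightarrow> nat \<Rightarrow> nat \<Rightarrow> complex" where
  "cmat_id n = (\<lambda>i j. if i < n \<and> j < n \<and> i = j then 1 else 0)"

definition cmat_norm :: "nat \<Rightarrow> (nat \<Rightarrow> nat \<Rightarrow> complex) \<Rightarrow> real" where
  "cmat_norm n T = Sup {sqrt (\<Sum>i<n. (cmod (\<Sum>j<n. T i j * x j))\<^sup>2) | x.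
                        (\<Sum>j<n. (cmod (x j))\<^sup>2) \<le> 1}"

definition cmul :: "nat \<Rightarrow> (nat \<Rightarrow> nat \<Rightarrow> complex) \<Rightarrow> (nat \<Rightarrow> nat \<Rightarrow> 'v::complex_vector)
    \<Rightarrow> (nat \<Rightarrow> nat \<Rightarrow> complex) \<Rightarrow> nat \<Rightarrow> nat \<Rightarrow> 'v" where
  "cmul n T X S = (\<lambda>i j. if i < n \<and> j < n
      then (\<Sum>k<n. \<Sum>l<n. (T i k * S l j) *\<^sub>C X k l) else 0)"

text \<open>Operator space structure on a complex Banach space 'v: matrix norms nrm n on
  V^{n x n} (nrm 1 being the given norm of V) satisfying Ruan's axioms.\<close>
definition operator_space ::
  "(nat \<Rightarrow> (nat \<Rightarrow> nat \<Rightarrow> 'v::{complex_normed_vector,banach}) \<Rightarrow> real) \<Rightarrow> bool" where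
  "operator_space nrm \<longleftrightarrow>
     (\<forall>X\<in>mats 1. nrm 1 X = norm (X 0 0)) \<and>
     (\<forall>n\<ge>1. \<forall>X\<in>mats n. \<forall>Y\<in>mats n.
        nrm n (\<lambda>i j. X i j + Y i j) \<le> nrm n X + nrm n Y) \<and>
     (\<forall>n\<ge>1. \<forall>X\<in>mats n. \<forall>c. nrm n (\<lambda>i j. c *\<^sub>C X i j) = cmod c * nrm n X) \<and>
     (\<forall>n\<ge>1. \<forall>X\<in>mats n. nrm n X = 0 \<longleftrightarrow> X = (\<lambda>i j. 0)) \<and>
     (\<forall>n\<ge>1. \<forall>m\<ge>1. \<forall>X\<in>mats n. \<forall>Y\<in>mats m.
        nrm (n + m) (dsum n m X Y) = max (nrm n X) (nrm m Y)) \<and>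
     (\<forall>n\<ge>1. \<forall>X\<in>mats n. \<forall>T\<in>mats n. \<forall>S\<in>mats n.
        nrm n (cmul n T X S) \<le> cmat_norm n T * nrm n X * cmat_norm n S)"

definition ncball :: "(nat \<Rightarrow> (nat \<Rightarrow> nat \<Rightarrow> 'v::complex_normed_vector) \<Rightarrow> real)
    \<Rightarrow> nat \<Rightarrow> (nat \<Rightarrow> nat \<Rightarrow> 'v) \<Rightarrow> real \<Rightarrow> (nat \<times> (nat \<Rightarrow> nat \<Rightarrow> 'v)) set" where
  "ncball nrm s Y r = {(k, X). \<exists>m\<ge>1. k = s * m \<and> X \<in> mats k \<and>
       nrm k (\<lambda>i j. X i j - dsum_rep s m Y i j) < r}"

definition nc_top :: "(nat \<Rightarrow> (nat \<Rightarrow> nat \<Rightarrow> 'v::complex_normed_vector) \<Rightarrow> real)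
    \<Rightarrow> (nat \<times> (nat \<Rightarrow> nat \<Rightarrow> 'v)) topology" where
  "nc_top nrm = topology_generated_by
     {ncball nrm s Y r | s Y r. 1 \<le> s \<and> Y \<in> mats s \<and> 0 < r}"

definition nc_set :: "(nat \<times> (nat \<Rightarrow> nat \<Rightarrow> 'a::zero)) set \<Rightarrow> bool" where
  "nc_set \<Omega> \<longleftrightarrow> \<Omega> \<subseteq> ncspace \<and>
     (\<forall>n X m Y. (n, X) \<in> \<Omega> \<and> (m, Y) \<in> \<Omega> \<longrightarrow> (n + m, dsum n m X Y) \<in> \<Omega>)"

definition nc_function :: "(nat \<times> (nat \<Rightarrow> nat \<Rightarrow> 'v::complex_vector)) set
    \<Rightarrow> (nat \<times> (nat \<Rightarrow> nat \<Rightarrow> 'v) \<Rightarrow> nat \<times> (nat \<Rightarrow> nat \<Rightarrow> 'w::complex_vector)) \<Rightarrow> bool" where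
  "nc_function \<Omega> f \<longleftrightarrow>
     (\<forall>n X. (n, X) \<in> \<Omega> \<longrightarrow> f (n, X) \<in> ncspace \<and> fst (f (n, X)) = n) \<and>
     (\<forall>n X m Y. (n, X) \<in> \<Omega> \<and> (m, Y) \<in> \<Omega> \<longrightarrow>
        f (n + m, dsum n m X Y) = (n + m, dsum n m (snd (f (n, X))) (snd (f (m, Y))))) \<and>
     (\<forall>n S Sinv X. S \<in> mats n \<and> Sinv \<in> mats n \<and>
        cmat_mult n S Sinv = cmat_id n \<and> cmat_mult n Sinv S = cmat_id n \<and>
        (n, X) \<in> \<Omega> \<and> (n, cmul n S X Sinv) \<in> \<Omega> \<longrightarrow>
        f (n, cmul n S X Sinv) = (n, cmul n S (snd (f (n, X))) Sinv))"

definition uniformly_locally_bounded ::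
  "(nat \<Rightarrow> (nat \<Rightarrow> nat \<Rightarrow> 'v::complex_normed_vector) \<Rightarrow> real)
   \<Rightarrow> (nat \<Rightarrow> (nat \<Rightarrow> nat \<Rightarrow> 'w::complex_normed_vector) \<Rightarrow> real)
   \<Rightarrow> (nat \<times> (nat \<Rightarrow> nat \<Rightarrow> 'v)) set
   \<Rightarrow> (nat \<times> (nat \<Rightarrow> nat \<Rightarrow> 'v) \<Rightarrow> nat \<times> (nat \<Rightarrow> nat \<Rightarrow> 'w)) \<Rightarrow> bool" where
  "uniformly_locally_bounded nrmV nrmW \<Omega> f \<longleftrightarrow>
     (\<forall>s Y. (s, Y) \<in> \<Omega> \<longrightarrow> (\<exists>r>0. ncball nrmV s Y r \<subseteq> \<Omega> \<and>
        (\<exists>M. \<forall>k X. (k, X) \<in> ncball nrmV s Y r \<longrightarrow> nrmW k (snd (f (k, X))) \<le> M)))"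

definition G_differentiable ::
  "(nat \<Rightarrow> (nat \<Rightarrow> nat \<Rightarrow> 'w::complex_normed_vector) \<Rightarrow> real)
   \<Rightarrow> (nat \<times> (nat \<Rightarrow> nat \<Rightarrow> 'v::complex_normed_vector)) set
   \<Rightarrow> (nat \<times> (nat \<Rightarrow> nat \<Rightarrow> 'v) \<Rightarrow> nat \<times> (nat \<Rightarrow> nat \<Rightarrow> 'w)) \<Rightarrow> bool" where
  "G_differentiable nrmW \<Omega> f \<longleftrightarrow>
     (\<forall>n X Z. (n, X) \<in> \<Omega> \<and> Z \<in> mats n \<longrightarrow>
        (\<exists>L\<in>mats n. ((\<lambda>t::complex. nrmW n (\<lambda>i j.
            inverse t *\<^sub>C (snd (f (n, \<lambda>p q. X p q + t *\<^sub>C Z p q)) i j - snd (f (n, X)) i j)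
            - L i j)) \<longlongrightarrow> 0) (at 0)))"

definition uniformly_analytic where
  "uniformly_analytic nrmV nrmW \<Omega> f \<longleftrightarrow>
     uniformly_locally_bounded nrmV nrmW \<Omega> f \<and> G_differentiable nrmW \<Omega> f"

end

theory Submission
  imports Defs
begin

text \<open>Everything rests on one estimate: if \<open>\<parallel>f\<parallel> \<le> M\<close> on the nc ball \<open>B(Y, r)\<close>, then \<open>f\<close> is
  \<open>4M/r\<close>-Lipschitz on \<open>B(Y, r/2)\<close>, uniformly in the matrix level. Conjugating \<open>X1 \<oplus> X2\<close> by the shear
  \<open>[[I, c I], [0, I]]\<close> gives \<open>[[X1, c (X2 - X1)], [0, X2]]\<close>, which stays in \<open>B(Y, r)\<close> when
  \<open>|c| \<parallel>X1 - X2\<parallel> = r/4\<close>; as \<open>f\<close> respects direct sums and similarities, its value there has upper right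
  corner \<open>c (f X2 - f X1)\<close>, and a corner is no larger in norm than the whole matrix (Ruan's axiom).

  The Lipschitz estimate makes \<open>f\<close> continuous for the uniformly-open topologies; conversely, the preimage
  of the unit nc ball about \<open>f Y\<close> is a uniformly open neighbourhood of \<open>Y\<close> on which \<open>f\<close> is bounded.
  Finally, \<open>[[X, \<epsilon> Z], [0, X + t Z]]\<close> is the shear conjugate of \<open>X \<oplus> (X + t Z)\<close> with \<open>c = \<epsilon>/t\<close>, so the
  difference quotient of \<open>f\<close> at \<open>X\<close> in direction \<open>Z\<close> is \<open>1/\<epsilon>\<close> times a corner of \<open>f\<close> at that block;
  by the Lipschitz estimate it converges as \<open>t \<rightarrow> 0\<close>, which gives G-differentiability.\<close>

lemma scaleC_zero_right [simp]: "a *\<^sub>C (0::'a::complex_vector) = 0"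
  by (metis add_cancel_right_right scaleC_add_right)

lemma scaleC_zero_left [simp]: "0 *\<^sub>C (x::'a::complex_vector) = 0"
  by (metis of_real_0 scaleR_scaleC scaleR_zero_left)

lemma scaleC_minus_left: "(- a) *\<^sub>C x = - (a *\<^sub>C (x::'a::complex_vector))"
  by (metis of_real_1 of_real_minus scaleR_minus1_left scaleR_scaleC mult_minus1 scaleC_scaleC)

lemma scaleC_diff_right: "a *\<^sub>C (x - y) = a *\<^sub>C x - a *\<^sub>C (y::'a::complex_vector)"
  by (metis add_diff_cancel scaleC_add_right diff_add_cancel)

lemma scaleC_sum_right: "a *\<^sub>C (\<Sum>k\<in>A. g k) = (\<Sum>k\<in>A. a *\<^sub>C (g k::'a::complex_vector))"
  by (induction A rule: infinite_finite_induct) (auto simp: scaleC_add_right)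

lemma mats_outside: "X \<in> mats n \<Longrightarrow> \<not> (i < n \<and> j < n) \<Longrightarrow> X i j = 0"
  by (auto simp: mats_def)

lemma mats_add [intro]: "X \<in> mats n \<Longrightarrow> Y \<in> mats n \<Longrightarrow> (\<lambda>i j. X i j + Y i j) \<in> mats n"
  for X Y :: "nat \<Rightarrow> nat \<Rightarrow> 'a::monoid_add"
  by (auto simp: mats_def)

lemma mats_diff [intro]: "X \<in> mats n \<Longrightarrow> Y \<in> mats n \<Longrightarrow> (\<lambda>i j. X i j - Y i j) \<in> mats n"
  for X Y :: "nat \<Rightarrow> nat \<Rightarrow> 'a::ab_group_add"
  by (auto simp: mats_def)

lemma mats_scaleC [intro]: "X \<in> mats n \<Longrightarrow> (\<lambda>i j. c *\<^sub>C X i j) \<in> mats n"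
  by (auto simp: mats_def)

lemma mats_zero [intro]: "(\<lambda>i j. 0) \<in> mats n"
  by (auto simp: mats_def)

lemma mats_dsum [intro]: "dsum n m X Y \<in> mats (n + m)"
  by (auto simp: mats_def dsum_def)

lemma mats_dsum_rep [intro]: "dsum_rep s m Y \<in> mats (s * m)"
  by (auto simp: mats_def dsum_rep_def)

lemma dsum_rep_1: "Y \<in> mats s \<Longrightarrow> dsum_rep s 1 Y = Y"
  unfolding fun_eq_iff dsum_rep_def by (metis div_less less_one mats_outside mod_less mult_1_right)

lemma div_eq_iff_bounds: "1 \<le> s \<Longrightarrow> i div s = m \<longleftrightarrow> s * m \<le> i \<and> i < s * Suc m"
  for s :: nat
  by (metis One_nat_def Suc_n_not_le_n div_le_mono div_nat_eqI div_times_less_eq_dividend leI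
      mult.commute nonzero_mult_div_cancel_left)

lemma dsum_rep_Suc:
  assumes s: "1 \<le> s"
  shows "dsum_rep s (Suc m) Y = dsum (s * m) s (dsum_rep s m Y) Y"
proof (intro ext)
  fix i j
  have below: "i < s * m \<longleftrightarrow> i div s < m" for i
    using s by (simp add: div_less_iff_less_mult mult.commute)
  have mod: "i div s = m \<Longrightarrow> i mod s = i - s * m" for i
    by (metis minus_mult_div_eq_mod mult.commute)
  show "dsum_rep s (Suc m) Y i j = dsum (s * m) s (dsum_rep s m Y) Y i j"
    using div_eq_iff_bounds[OF s, of i m] div_eq_iff_bounds[OF s, of j m] below[of i] below[of j]
      mod[of i] mod[of j]
    unfolding dsum_rep_def dsum_def by (auto simp: less_Suc_eq)
qed

lemma dsum_rep_2: "1 \<le> s \<Longrightarrow> Y \<in> mats s \<Longrightarrow> dsum_rep s 2 Y = dsum s s Y Y"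
  using dsum_rep_Suc[of s 1 Y] dsum_rep_1[of Y s] by (simp add: numeral_2_eq_2)

lemma dsum_rep_dsum_rep:
  assumes "1 \<le> s"
  shows "dsum_rep (s * m) k (dsum_rep s m Y) = dsum_rep s (m * k) Y"
proof (intro ext)
  fix i j
  have div_eq: "i div s = j div s \<longleftrightarrow> i div s div m = j div s div m \<and> i div s mod m = j div s mod m"
    by (metis div_mult_mod_eq)
  show "dsum_rep (s * m) k (dsum_rep s m Y) i j = dsum_rep s (m * k) Y i j"
  proof (cases "m = 0")
    case False
    then have "i mod (s * m) < s * m" "j mod (s * m) < s * m" using assms by simp_all
    then show ?thesis
      unfolding dsum_rep_def using div_eq assms
      by (auto simp: div_mult2_eq mod_mult2_eq mult.assoc)
  qed (simp add: dsum_rep_def)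
qed

lemma dsum_rep_diff:
  "dsum_rep s k (\<lambda>i j. A i j - B i j) = (\<lambda>i j. dsum_rep s k A i j - dsum_rep s k B i j)"
  for A B :: "nat \<Rightarrow> nat \<Rightarrow> 'a::ab_group_add"
  by (auto simp: dsum_rep_def fun_eq_iff)

locale op_space =
  fixes nrm :: "nat \<Rightarrow> (nat \<Rightarrow> nat \<Rightarrow> 'v::{complex_normed_vector,banach}) \<Rightarrow> real"
  assumes operator_space: "operator_space nrm"
begin

lemma nrm_add_le:
  "n \<ge> 1 \<Longrightarrow> X \<in> mats n \<Longrightarrow> Y \<in> mats n \<Longrightarrow> nrm n (\<lambda>i j. X i j + Y i j) \<le> nrm n X + nrm n Y"
  using operator_space unfolding operator_space_def by blast

lemma nrm_scaleC: "n \<ge> 1 \<Longrightarrow> X \<in> mats n \<Longrightarrow> nrm n (\<lambda>i j. c *\<^sub>C X i j) = cmod c * nrm n X"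
  using operator_space unfolding operator_space_def by blast

lemma nrm_eq_0_imp: "n \<ge> 1 \<Longrightarrow> X \<in> mats n \<Longrightarrow> nrm n X = 0 \<Longrightarrow> X = (\<lambda>i j. 0)"
  using operator_space unfolding operator_space_def by blast

lemma nrm_dsum:
  "n \<ge> 1 \<Longrightarrow> m \<ge> 1 \<Longrightarrow> X \<in> mats n \<Longrightarrow> Y \<in> mats m \<Longrightarrow>
    nrm (n + m) (dsum n m X Y) = max (nrm n X) (nrm m Y)"
  using operator_space unfolding operator_space_def by blast

lemma nrm_cmul_le:
  "n \<ge> 1 \<Longrightarrow> X \<in> mats n \<Longrightarrow> T \<in> mats n \<Longrightarrow> S \<in> mats n \<Longrightarrow>
    nrm n (cmul n T X S) \<le> cmat_norm n T * nrm n X * cmat_norm n S"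
  using operator_space unfolding operator_space_def by blast

lemma nrm_zero: "n \<ge> 1 \<Longrightarrow> nrm n (\<lambda>i j. 0) = 0"
  using nrm_scaleC[of n "\<lambda>i j. 0" 0] by auto

lemma nrm_minus: "n \<ge> 1 \<Longrightarrow> X \<in> mats n \<Longrightarrow> nrm n (\<lambda>i j. - X i j) = nrm n X"
  using nrm_scaleC[of n X "-1"] by (simp add: scaleC_minus_left scaleC_one)

lemma nrm_nonneg: "n \<ge> 1 \<Longrightarrow> X \<in> mats n \<Longrightarrow> 0 \<le> nrm n X"
  using nrm_add_le[of n X "\<lambda>i j. - X i j"] nrm_zero nrm_minus by (auto simp: mats_def)

lemma nrm_minus_commute:
  "n \<ge> 1 \<Longrightarrow> X \<in> mats n \<Longrightarrow> Y \<in> mats n \<Longrightarrow>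
    nrm n (\<lambda>i j. X i j - Y i j) = nrm n (\<lambda>i j. Y i j - X i j)"
  using nrm_minus[of n "\<lambda>i j. Y i j - X i j"] by auto

lemma nrm_triangle_diff:
  "n \<ge> 1 \<Longrightarrow> X \<in> mats n \<Longrightarrow> Y \<in> mats n \<Longrightarrow> Z \<in> mats n \<Longrightarrow>
    nrm n (\<lambda>i j. X i j - Z i j) \<le> nrm n (\<lambda>i j. X i j - Y i j) + nrm n (\<lambda>i j. Y i j - Z i j)"
  using nrm_add_le[of n "\<lambda>i j. X i j - Y i j" "\<lambda>i j. Y i j - Z i j"] by auto

lemma nrm_le_diff_add:
  "n \<ge> 1 \<Longrightarrow> X \<in> mats n \<Longrightarrow> Y \<in> mats n \<Longrightarrow> nrm n X \<le> nrm n (\<lambda>i j. X i j - Y i j) + nrm n Y"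
  using nrm_add_le[of n "\<lambda>i j. X i j - Y i j" Y] by auto

lemma nrm_dsum_rep:
  assumes "1 \<le> s" "1 \<le> m" "A \<in> mats s"
  shows "nrm (s * m) (dsum_rep s m A) = nrm s A"
  using assms(2)
proof (induction m rule: dec_induct)
  case base
  show ?case using assms dsum_rep_1[of A s] by simp
next
  case (step m)
  have "nrm (s * Suc m) (dsum_rep s (Suc m) A) = nrm (s * m + s) (dsum (s * m) s (dsum_rep s m A) A)"
    using assms by (simp add: dsum_rep_Suc add.commute)
  also have "\<dots> = max (nrm (s * m) (dsum_rep s m A)) (nrm s A)"
    using step assms by (intro nrm_dsum) auto
  finally show ?case using step by simp
qed

end

section \<open>Reindexing by partial injections is contractive\<close>

definition rel_mat :: "nat \<Rightarrow> (nat \<Rightarrow> nat \<Rightarrow> bool) \<Rightarrow> nat \<Rightarrow> nat \<Rightarrow> complex" where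
  "rel_mat N R = (\<lambda>i j. if i < N \<and> j < N \<and> R i j then 1 else 0)"

definition partial_matching :: "nat \<Rightarrow> (nat \<Rightarrow> nat \<Rightarrow> bool) \<Rightarrow> bool" where
  "partial_matching N R \<longleftrightarrow>
     (\<forall>i<N. \<forall>j<N. \<forall>j'<N. R i j \<longrightarrow> R i j' \<longrightarrow> j = j') \<and>
     (\<forall>i<N. \<forall>i'<N. \<forall>j<N. R i j \<longrightarrow> R i' j \<longrightarrow> i = i')"

lemma mats_rel_mat [intro]: "rel_mat N R \<in> mats N"
  by (auto simp: mats_def rel_mat_def)

lemma cmod_sum_square_le_subsingleton:
  assumes "\<forall>a\<in>S. \<forall>b\<in>S. a = b"
  shows "(cmod (\<Sum>j\<in>S. x j))\<^sup>2 \<le> (\<Sum>j\<in>S. (cmod (x j))\<^sup>2)"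
proof -
  have "S = {} \<or> (\<exists>a. S = {a})" using assms by blast
  then show ?thesis by auto
qed

lemma rel_mat_contraction:
  assumes R: "partial_matching N R"
  shows "(\<Sum>i<N. (cmod (\<Sum>j<N. rel_mat N R i j * x j))\<^sup>2) \<le> (\<Sum>j<N. (cmod (x j))\<^sup>2)"
proof -
  let ?row = "\<lambda>i. {j \<in> {..<N}. R i j}" and ?col = "\<lambda>j. {i \<in> {..<N}. R i j}"
  have "(\<Sum>j<N. rel_mat N R i j * x j) = sum x (?row i)" if "i < N" for i
  proof -
    have "(\<Sum>j<N. rel_mat N R i j * x j) = (\<Sum>j<N. if R i j then x j else 0)"
      using that by (intro sum.cong refl) (simp add: rel_mat_def)
    then show ?thesis by (simp only: sum.inter_filter[OF finite_lessThan])
  qed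
  then have "(\<Sum>i<N. (cmod (\<Sum>j<N. rel_mat N R i j * x j))\<^sup>2) = (\<Sum>i<N. (cmod (sum x (?row i)))\<^sup>2)"
    by simp
  also have "\<dots> \<le> (\<Sum>i<N. \<Sum>j\<in>?row i. (cmod (x j))\<^sup>2)"
    using R unfolding partial_matching_def
    by (intro sum_mono cmod_sum_square_le_subsingleton) auto
  also have "\<dots> = (\<Sum>i<N. \<Sum>j<N. if R i j then (cmod (x j))\<^sup>2 else 0)"
    by (simp only: sum.inter_filter[OF finite_lessThan])
  also have "\<dots> = (\<Sum>j<N. \<Sum>i<N. if R i j then (cmod (x j))\<^sup>2 else 0)"
    by (rule sum.swap)
  also have "\<dots> = (\<Sum>j<N. card (?col j) * (cmod (x j))\<^sup>2)"
    by (simp only: sum.inter_filter[OF finite_lessThan, symmetric]) simp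
  also have "\<dots> \<le> (\<Sum>j<N. (cmod (x j))\<^sup>2)"
  proof (intro sum_mono)
    fix j assume "j \<in> {..<N}"
    then have "card (?col j) \<le> 1"
      using R unfolding partial_matching_def One_nat_def by (subst card_le_Suc0_iff_eq) auto
    then show "card (?col j) * (cmod (x j))\<^sup>2 \<le> (cmod (x j))\<^sup>2"
      by (simp add: mult_left_le_one_le)
  qed
  finally show ?thesis .
qed

lemma cmat_norm_rel_mat:
  assumes R: "partial_matching N R"
  shows "0 \<le> cmat_norm N (rel_mat N R)" "cmat_norm N (rel_mat N R) \<le> 1"
proof -
  let ?S = "{sqrt (\<Sum>i<N. (cmod (\<Sum>j<N. rel_mat N R i j * x j))\<^sup>2) | x. (\<Sum>j<N. (cmod (x j))\<^sup>2) \<le> 1}"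
  have zero: "0 \<in> ?S"
    unfolding mem_Collect_eq by (rule exI[of _ "\<lambda>_. 0"]) simp
  have ub: "y \<le> 1" if "y \<in> ?S" for y
  proof -
    from that obtain x where y: "y = sqrt (\<Sum>i<N. (cmod (\<Sum>j<N. rel_mat N R i j * x j))\<^sup>2)"
      and x: "(\<Sum>j<N. (cmod (x j))\<^sup>2) \<le> 1" by blast
    show ?thesis unfolding y using order.trans[OF rel_mat_contraction[OF R] x] by simp
  qed
  show "cmat_norm N (rel_mat N R) \<le> 1"
    unfolding cmat_norm_def using zero by (intro cSup_least ub) auto
  have "bdd_above ?S"
    using ub by (rule bdd_aboveI)
  then show "0 \<le> cmat_norm N (rel_mat N R)"
    unfolding cmat_norm_def by (intro cSup_upper2[OF zero]) simp_all
qed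

definition reindex :: "nat \<Rightarrow> (nat \<Rightarrow> nat) \<Rightarrow> (nat \<Rightarrow> nat) \<Rightarrow> (nat \<Rightarrow> nat \<Rightarrow> 'a::zero)
    \<Rightarrow> nat \<Rightarrow> nat \<Rightarrow> 'a" where
  "reindex N \<sigma> \<tau> X = (\<lambda>i j. if i < N \<and> j < N \<and> \<sigma> i < N \<and> \<tau> j < N then X (\<sigma> i) (\<tau> j) else 0)"

lemma cmul_rel_mat_eq_reindex:
  "cmul N (rel_mat N (\<lambda>i k. k = \<sigma> i)) X (rel_mat N (\<lambda>l j. l = \<tau> j)) = reindex N \<sigma> \<tau> X"
proof (intro ext)
  fix i j
  show "cmul N (rel_mat N (\<lambda>i k. k = \<sigma> i)) X (rel_mat N (\<lambda>l j. l = \<tau> j)) i j = reindex N \<sigma> \<tau> X i j"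
  proof (cases "i < N \<and> j < N")
    case True
    have "cmul N (rel_mat N (\<lambda>i k. k = \<sigma> i)) X (rel_mat N (\<lambda>l j. l = \<tau> j)) i j =
        (\<Sum>k<N. \<Sum>l<N. (rel_mat N (\<lambda>i k. k = \<sigma> i) i k * rel_mat N (\<lambda>l j. l = \<tau> j) l j) *\<^sub>C X k l)"
      using True by (simp only: cmul_def if_True simp_thms)
    also have "\<dots> = (\<Sum>k<N. \<Sum>l<N. if k = \<sigma> i then if l = \<tau> j then X k l else 0 else 0)"
      using True by (intro sum.cong refl) (simp add: rel_mat_def scaleC_one)
    also have "\<dots> = (\<Sum>k<N. if k = \<sigma> i then \<Sum>l<N. if l = \<tau> j then X k l else 0 else 0)"
      by (intro sum.cong refl) simp
    also have "\<dots> = reindex N \<sigma> \<tau> X i j"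
      using True by (simp add: reindex_def sum.delta)
    finally show ?thesis .
  qed (auto simp: cmul_def reindex_def)
qed

context op_space
begin

lemma nrm_reindex_le:
  assumes "N \<ge> 1" "X \<in> mats N"
    and "inj_on \<sigma> {i. i < N \<and> \<sigma> i < N}" "inj_on \<tau> {j. j < N \<and> \<tau> j < N}"
  shows "nrm N (reindex N \<sigma> \<tau> X) \<le> nrm N X"
proof -
  have "partial_matching N (\<lambda>i k. k = \<sigma> i)" "partial_matching N (\<lambda>l j. l = \<tau> j)"
    using assms(3,4) by (auto simp: partial_matching_def inj_on_def)
  note S = cmat_norm_rel_mat[OF this(1)] and T = cmat_norm_rel_mat[OF this(2)]
  have "nrm N (reindex N \<sigma> \<tau> X) \<le>
      cmat_norm N (rel_mat N (\<lambda>i k. k = \<sigma> i)) * nrm N X * cmat_norm N (rel_mat N (\<lambda>l j. l = \<tau> j))"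
    unfolding cmul_rel_mat_eq_reindex[symmetric] using assms(1,2) by (intro nrm_cmul_le) auto
  also have "\<dots> \<le> 1 * nrm N X * 1"
    using S T nrm_nonneg[OF assms(1,2)] by (intro mult_mono) auto
  finally show ?thesis by simp
qed

end

definition ur_block :: "nat \<Rightarrow> (nat \<Rightarrow> nat \<Rightarrow> 'a::zero) \<Rightarrow> nat \<Rightarrow> nat \<Rightarrow> 'a" where
  "ur_block n W = (\<lambda>i j. if i < n \<and> j < n then W i (j + n) else 0)"

definition ur_embed :: "nat \<Rightarrow> (nat \<Rightarrow> nat \<Rightarrow> 'a::zero) \<Rightarrow> nat \<Rightarrow> nat \<Rightarrow> 'a" where
  "ur_embed n B = (\<lambda>i j. if i < n \<and> n \<le> j \<and> j < 2 * n then B i (j - n) else 0)"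

lemma mats_ur_block [intro]: "ur_block n W \<in> mats n"
  by (auto simp: mats_def ur_block_def)

lemma mats_ur_embed [intro]: "ur_embed n B \<in> mats (2 * n)"
  by (auto simp: mats_def ur_embed_def)

lemma ur_block_diff:
  "ur_block n (\<lambda>i j. W i j - W' i j) = (\<lambda>i j. ur_block n W i j - ur_block n W' i j)"
  for W :: "nat \<Rightarrow> nat \<Rightarrow> 'a::ab_group_add"
  by (auto simp: fun_eq_iff ur_block_def)

lemma reindex_eq_dsum_ur_block:
  "W \<in> mats (2 * n) \<Longrightarrow>
    reindex (2 * n) (\<lambda>i. if i < n then i else 2 * n) (\<lambda>j. if j < n then j + n else 2 * n) W
      = dsum n n (ur_block n W) (\<lambda>i j. 0)"
  by (auto simp: fun_eq_iff reindex_def dsum_def ur_block_def)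

lemma reindex_eq_ur_embed:
  "B \<in> mats n \<Longrightarrow>
    reindex (2 * n) (\<lambda>i. if i < n then i else 2 * n) (\<lambda>j. if n \<le> j \<and> j < 2 * n then j - n else 2 * n)
      (dsum n n B (\<lambda>i j. 0)) = ur_embed n B"
  by (auto simp: fun_eq_iff reindex_def dsum_def ur_embed_def mats_def)

context op_space
begin

lemma nrm_ur_block_le:
  assumes "n \<ge> 1" "W \<in> mats (2 * n)"
  shows "nrm n (ur_block n W) \<le> nrm (2 * n) W"
proof -
  have "nrm n (ur_block n W) = nrm (2 * n) (dsum n n (ur_block n W) (\<lambda>i j. 0))"
    using assms nrm_dsum[OF _ _ mats_ur_block mats_zero, of n n W] nrm_zero
      nrm_nonneg[OF _ mats_ur_block, of n W] by (auto simp: mult_2)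
  also have "\<dots> \<le> nrm (2 * n) W"
    unfolding reindex_eq_dsum_ur_block[OF assms(2), symmetric]
    using assms by (intro nrm_reindex_le) (auto simp: inj_on_def)
  finally show ?thesis .
qed

lemma nrm_ur_embed_le:
  assumes "n \<ge> 1" "B \<in> mats n"
  shows "nrm (2 * n) (ur_embed n B) \<le> nrm n B"
proof -
  have "nrm (2 * n) (ur_embed n B) \<le> nrm (2 * n) (dsum n n B (\<lambda>i j. 0))"
    unfolding reindex_eq_ur_embed[OF assms(2), symmetric]
    using assms mats_dsum[of n n B "\<lambda>i j. 0"]
    by (intro nrm_reindex_le) (auto simp: inj_on_def mult_2)
  also have "\<dots> = nrm n B"
    using assms nrm_dsum[of n n B "\<lambda>i j. 0"] nrm_zero nrm_nonneg[of n B] by (auto simp: mult_2)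
  finally show ?thesis .
qed

end

section \<open>Upper triangular blocks and shears\<close>

definition block_ut :: "nat \<Rightarrow> (nat \<Rightarrow> nat \<Rightarrow> 'a::monoid_add) \<Rightarrow> (nat \<Rightarrow> nat \<Rightarrow> 'a)
    \<Rightarrow> (nat \<Rightarrow> nat \<Rightarrow> 'a) \<Rightarrow> nat \<Rightarrow> nat \<Rightarrow> 'a" where
  "block_ut n X1 X2 B = (\<lambda>i j. dsum n n X1 X2 i j + ur_embed n B i j)"

lemma mats_block_ut [intro]: "block_ut n X1 X2 B \<in> mats (2 * n)"
  unfolding block_ut_def using mats_dsum[of n n X1 X2] mats_ur_embed[of n B]
  by (intro mats_add) (auto simp: mult_2)

lemma ur_block_block_ut: "B \<in> mats n \<Longrightarrow> ur_block n (block_ut n X1 X2 B) = B"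
  by (auto simp: fun_eq_iff ur_block_def block_ut_def dsum_def ur_embed_def mats_outside)

lemma dsum_eq_block_ut: "dsum n n X1 X2 = block_ut n X1 X2 (\<lambda>i j. 0)"
  by (auto simp: fun_eq_iff block_ut_def ur_embed_def)

lemma block_ut_diff:
  "(\<lambda>i j. block_ut n A1 A2 B i j - block_ut n C1 C2 D i j) =
   block_ut n (\<lambda>i j. A1 i j - C1 i j) (\<lambda>i j. A2 i j - C2 i j) (\<lambda>i j. B i j - D i j)"
  for A1 :: "nat \<Rightarrow> nat \<Rightarrow> 'a::ab_group_add"
  by (auto simp: fun_eq_iff block_ut_def dsum_def ur_embed_def)

lemma (in op_space) nrm_block_ut_le:
  assumes "n \<ge> 1" "X1 \<in> mats n" "X2 \<in> mats n" "B \<in> mats n"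
  shows "nrm (2 * n) (block_ut n X1 X2 B) \<le> max (nrm n X1) (nrm n X2) + nrm n B"
proof -
  have "nrm (2 * n) (block_ut n X1 X2 B) \<le> nrm (2 * n) (dsum n n X1 X2) + nrm (2 * n) (ur_embed n B)"
    unfolding block_ut_def using assms mats_dsum[of n n X1 X2] mats_ur_embed[of n B]
    by (intro nrm_add_le) (auto simp: mult_2)
  then show ?thesis
    using assms nrm_dsum[of n n X1 X2] nrm_ur_embed_le[of n B] by (simp add: mult_2)
qed

text \<open>\<open>shear n c\<close> is the block matrix \<open>[[I, c I], [0, I]]\<close> of size \<open>2 n\<close>.\<close>

definition shear :: "nat \<Rightarrow> complex \<Rightarrow> nat \<Rightarrow> nat \<Rightarrow> complex" where
  "shear n c = (\<lambda>i j. if i < 2 * n \<and> j < 2 * n then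
       (if i = j then 1 else 0) + (if i < n \<and> j = i + n then c else 0) else 0)"

lemma mats_shear [intro]: "shear n c \<in> mats (2 * n)"
  by (auto simp: mats_def shear_def)

lemma sum_two_points:
  assumes "a < (N::nat)" "P \<Longrightarrow> b < N" "P \<Longrightarrow> a \<noteq> b"
  shows "(\<Sum>k<N. (if k = a then u k else 0) + (if P \<and> k = b then w k else 0)) =
     u a + (if P then w b else (0::'b::comm_monoid_add))"
  unfolding sum.distrib using assms by (cases P) simp_all

lemma shear_row_mult:
  assumes "i < 2 * n"
  shows "(\<Sum>k<2 * n. shear n c i k * v k) = v i + (if i < n then c * v (i + n) else 0)"
proof -
  have "(\<Sum>k<2 * n. shear n c i k * v k) =
     (\<Sum>k<2 * n. (if k = i then v k else 0) + (if i < n \<and> k = i + n then c * v k else 0))"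
    using assms by (intro sum.cong refl) (auto simp: shear_def distrib_right)
  also have "\<dots> = v i + (if i < n then c * v (i + n) else 0)"
    using assms by (intro sum_two_points) auto
  finally show ?thesis .
qed

lemma shear_row_scaleC:
  assumes "i < 2 * n"
  shows "(\<Sum>k<2 * n. shear n c i k *\<^sub>C v k) = v i + (if i < n then c *\<^sub>C v (i + n) else (0::'v::complex_vector))"
proof -
  have "(\<Sum>k<2 * n. shear n c i k *\<^sub>C v k) =
     (\<Sum>k<2 * n. (if k = i then v k else 0) + (if i < n \<and> k = i + n then c *\<^sub>C v k else 0))"
    using assms by (intro sum.cong refl) (auto simp: shear_def scaleC_add_left scaleC_one)
  also have "\<dots> = v i + (if i < n then c *\<^sub>C v (i + n) else 0)"
    using assms by (intro sum_two_points) auto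
  finally show ?thesis .
qed

lemma shear_col_scaleC:
  assumes "j < 2 * n"
  shows "(\<Sum>l<2 * n. shear n c l j *\<^sub>C v l) = v j + (if n \<le> j then c *\<^sub>C v (j - n) else (0::'v::complex_vector))"
proof -
  have "(\<Sum>l<2 * n. shear n c l j *\<^sub>C v l) =
     (\<Sum>l<2 * n. (if l = j then v l else 0) + (if n \<le> j \<and> l = j - n then c *\<^sub>C v l else 0))"
    using assms by (intro sum.cong refl) (auto simp: shear_def scaleC_add_left scaleC_one)
  also have "\<dots> = v j + (if n \<le> j then c *\<^sub>C v (j - n) else 0)"
    using assms by (intro sum_two_points) auto
  finally show ?thesis .
qed

lemma shear_mult: "cmat_mult (2 * n) (shear n c) (shear n d) = shear n (c + d)"
proof (intro ext)
  fix i j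
  show "cmat_mult (2 * n) (shear n c) (shear n d) i j = shear n (c + d) i j"
  proof (cases "i < 2 * n \<and> j < 2 * n")
    case True
    then have "cmat_mult (2 * n) (shear n c) (shear n d) i j =
        shear n d i j + (if i < n then c * shear n d (i + n) j else 0)"
      unfolding cmat_mult_def using shear_row_mult[of i n c "\<lambda>k. shear n d k j"] by simp
    also have "\<dots> = shear n (c + d) i j"
      using True unfolding shear_def by (cases "i < n") auto
    finally show ?thesis .
  qed (auto simp: cmat_mult_def shear_def)
qed

lemma shear_inverse:
  "cmat_mult (2 * n) (shear n c) (shear n (- c)) = cmat_id (2 * n)"
  "cmat_mult (2 * n) (shear n (- c)) (shear n c) = cmat_id (2 * n)"
  by (simp_all add: shear_mult) (auto simp: fun_eq_iff shear_def cmat_id_def)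

lemma cmul_eq_nested_sum:
  "i < N \<Longrightarrow> j < N \<Longrightarrow> cmul N T X S i j = (\<Sum>k<N. T i k *\<^sub>C (\<Sum>l<N. S l j *\<^sub>C X k l))"
  unfolding cmul_def by (simp add: scaleC_sum_right scaleC_scaleC)

lemma cmul_shear_dsum:
  assumes "X1 \<in> mats n" "X2 \<in> mats n"
  shows "cmul (2 * n) (shear n c) (dsum n n X1 X2) (shear n (- c)) =
     block_ut n X1 X2 (\<lambda>p q. c *\<^sub>C (X2 p q - X1 p q))"
proof (intro ext)
  fix i j
  let ?D = "dsum n n X1 X2"
  show "cmul (2 * n) (shear n c) ?D (shear n (- c)) i j = block_ut n X1 X2 (\<lambda>p q. c *\<^sub>C (X2 p q - X1 p q)) i j"
  proof (cases "i < 2 * n \<and> j < 2 * n")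
    case True
    let ?h = "\<lambda>k. ?D k j + (if n \<le> j then (- c) *\<^sub>C ?D k (j - n) else 0)"
    have "cmul (2 * n) (shear n c) ?D (shear n (- c)) i j = (\<Sum>k<2 * n. shear n c i k *\<^sub>C ?h k)"
      using True by (simp add: cmul_eq_nested_sum shear_col_scaleC)
    also have "\<dots> = ?h i + (if i < n then c *\<^sub>C ?h (i + n) else 0)"
      using True by (simp add: shear_row_scaleC)
    also have "\<dots> = block_ut n X1 X2 (\<lambda>p q. c *\<^sub>C (X2 p q - X1 p q)) i j"
      using True by (cases "i < n"; cases "j < n")
        (auto simp: block_ut_def dsum_def ur_embed_def scaleC_minus_left scaleC_diff_right scaleC_add_right)
    finally show ?thesis .
  qed (auto simp: cmul_def block_ut_def dsum_def ur_embed_def)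
qed

section \<open>The uniformly-open topology\<close>

definition nc_open :: "(nat \<Rightarrow> (nat \<Rightarrow> nat \<Rightarrow> 'v::complex_normed_vector) \<Rightarrow> real)
    \<Rightarrow> (nat \<times> (nat \<Rightarrow> nat \<Rightarrow> 'v)) set \<Rightarrow> bool" where
  "nc_open nrm U \<longleftrightarrow> U \<subseteq> ncspace \<and> (\<forall>n X. (n, X) \<in> U \<longrightarrow> (\<exists>r>0. ncball nrm n X r \<subseteq> U))"

lemma ncball_mono: "r \<le> r' \<Longrightarrow> ncball nrm s Y r \<subseteq> ncball nrm s Y r'"
  unfolding ncball_def by fastforce

lemma ncball_subset_ncspace: "1 \<le> s \<Longrightarrow> ncball nrm s Y r \<subseteq> ncspace"
  unfolding ncball_def ncspace_def by auto

context op_space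
begin

lemma ncball_center: "1 \<le> n \<Longrightarrow> X \<in> mats n \<Longrightarrow> 0 < r \<Longrightarrow> (n, X) \<in> ncball nrm n X r"
proof -
  assume "1 \<le> n" "X \<in> mats n" "0 < r"
  moreover have "nrm n (\<lambda>i j. X i j - dsum_rep n 1 X i j) = 0"
    using calculation nrm_zero dsum_rep_1[of X n] by simp
  ultimately show ?thesis unfolding ncball_def by (auto intro!: exI[of _ 1])
qed

lemma ncball_recenter:
  assumes s: "1 \<le> s" and X: "(n, X) \<in> ncball nrm s Y r"
  shows "\<exists>e>0. ncball nrm n X e \<subseteq> ncball nrm s Y r"
proof -
  obtain m where m: "m \<ge> 1" "n = s * m" "X \<in> mats n"
    and "nrm n (\<lambda>i j. X i j - dsum_rep s m Y i j) < r"
    using X unfolding ncball_def by blast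
  moreover define d where "d = nrm n (\<lambda>i j. X i j - dsum_rep s m Y i j)"
  ultimately have d: "d < r" by simp
  have "ncball nrm n X (r - d) \<subseteq> ncball nrm s Y r"
  proof
    fix p assume "p \<in> ncball nrm n X (r - d)"
    then obtain k Z m' where p: "p = (k, Z)" "m' \<ge> 1" "k = n * m'" "Z \<in> mats k"
      and Z: "nrm k (\<lambda>i j. Z i j - dsum_rep n m' X i j) < r - d"
      unfolding ncball_def by blast
    have k: "1 \<le> k" using p m s by simp
    have rep: "dsum_rep n m' (dsum_rep s m Y) = dsum_rep s (m * m') Y"
      using dsum_rep_dsum_rep[OF s] m by simp
    have km: "s * (m * m') = k" using p m by (simp add: mult.assoc)
    have "nrm k (\<lambda>i j. dsum_rep n m' X i j - dsum_rep n m' (dsum_rep s m Y) i j) = d"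
      unfolding d_def dsum_rep_diff[symmetric] p(3) using s m p
      by (intro nrm_dsum_rep) auto
    then have "nrm k (\<lambda>i j. dsum_rep n m' X i j - dsum_rep s (m * m') Y i j) = d"
      unfolding rep .
    moreover have "nrm k (\<lambda>i j. Z i j - dsum_rep s (m * m') Y i j) \<le>
        nrm k (\<lambda>i j. Z i j - dsum_rep n m' X i j) + nrm k (\<lambda>i j. dsum_rep n m' X i j - dsum_rep s (m * m') Y i j)"
      using mats_dsum_rep[of n m' X, folded p(3)] mats_dsum_rep[of s "m * m'" Y, unfolded km]
      by (intro nrm_triangle_diff[OF k p(4)])
    ultimately have "nrm k (\<lambda>i j. Z i j - dsum_rep s (m * m') Y i j) < r"
      using Z by simp
    then show "p \<in> ncball nrm s Y r"
      unfolding ncball_def p using p(2,4) m(1) by (auto simp: p(3) m(2) mult.assoc intro!: exI[of _ "m * m'"])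
  qed
  then show ?thesis using d by (intro exI[of _ "r - d"]) simp
qed

lemma generate_topology_on_ncballs_imp_nc_open:
  "generate_topology_on {ncball nrm s Y r | s Y r. 1 \<le> s \<and> Y \<in> mats s \<and> 0 < r} U \<Longrightarrow> nc_open nrm U"
proof (induction rule: generate_topology_on.induct)
  case Empty
  then show ?case by (simp add: nc_open_def)
next
  case (Int a b)
  show ?case unfolding nc_open_def
  proof (intro conjI allI impI)
    show "a \<inter> b \<subseteq> ncspace" using Int.IH unfolding nc_open_def by blast
    fix n X assume "(n, X) \<in> a \<inter> b"
    then obtain r1 r2 where "r1 > 0" "ncball nrm n X r1 \<subseteq> a" "r2 > 0" "ncball nrm n X r2 \<subseteq> b"
      using Int.IH unfolding nc_open_def by blast
    then show "\<exists>r>0. ncball nrm n X r \<subseteq> a \<inter> b"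
      using ncball_mono[of "min r1 r2" r1 nrm n X] ncball_mono[of "min r1 r2" r2 nrm n X]
      by (intro exI[of _ "min r1 r2"]) auto
  qed
next
  case (UN K)
  then show ?case unfolding nc_open_def by (meson Union_iff Union_least Union_upper order_trans)
next
  case (Basis B)
  then obtain s Y r where "B = ncball nrm s Y r" "1 \<le> s" by blast
  then show ?case
    unfolding nc_open_def using ncball_subset_ncspace ncball_recenter by blast
qed

lemma nc_open_imp_generate_topology_on_ncballs:
  assumes U: "nc_open nrm U"
  shows "generate_topology_on {ncball nrm s Y r | s Y r. 1 \<le> s \<and> Y \<in> mats s \<and> 0 < r} U"
proof -
  let ?K = "{B. \<exists>n X r. (n, X) \<in> U \<and> 0 < r \<and> B = ncball nrm n X r \<and> B \<subseteq> U}"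
  have center: "1 \<le> n \<and> X \<in> mats n" if "(n, X) \<in> U" for n X
    using that U unfolding nc_open_def ncspace_def by auto
  have "U \<subseteq> \<Union>?K"
  proof
    fix p assume "p \<in> U"
    moreover obtain n X where p: "p = (n, X)" by fastforce
    ultimately obtain r where "r > 0" "ncball nrm n X r \<subseteq> U"
      using U unfolding nc_open_def by blast
    then show "p \<in> \<Union>?K"
      using ncball_center center \<open>p \<in> U\<close> p by blast
  qed
  then have "U = \<Union>?K" by blast
  moreover have "generate_topology_on {ncball nrm s Y r | s Y r. 1 \<le> s \<and> Y \<in> mats s \<and> 0 < r} (\<Union>?K)"
  proof (rule generate_topology_on.UN)
    fix B assume "B \<in> ?K"
    then obtain n X r where "(n, X) \<in> U" "0 < r" "B = ncball nrm n X r" by blast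
    then show "generate_topology_on {ncball nrm s Y r | s Y r. 1 \<le> s \<and> Y \<in> mats s \<and> 0 < r} B"
      using center by (intro generate_topology_on.Basis) blast
  qed
  ultimately show ?thesis by simp
qed

lemma openin_nc_top_iff: "openin (nc_top nrm) U \<longleftrightarrow> nc_open nrm U"
  unfolding nc_top_def openin_topology_generated_by_iff
  using generate_topology_on_ncballs_imp_nc_open nc_open_imp_generate_topology_on_ncballs by blast

lemma topspace_nc_top: "topspace (nc_top nrm) = ncspace"
proof
  show "topspace (nc_top nrm) \<subseteq> ncspace"
    unfolding nc_top_def topology_generated_by_topspace
  proof (rule Union_least)
    fix B assume "B \<in> {ncball nrm s Y r | s Y r. 1 \<le> s \<and> Y \<in> mats s \<and> 0 < r}"
    then show "B \<subseteq> ncspace" using ncball_subset_ncspace by blast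
  qed
  show "ncspace \<subseteq> topspace (nc_top nrm)"
  proof
    fix p :: "nat \<times> (nat \<Rightarrow> nat \<Rightarrow> 'v)" assume "p \<in> ncspace"
    then obtain n X where p: "p = (n, X)" "1 \<le> n" "X \<in> mats n" unfolding ncspace_def by blast
    then have "p \<in> ncball nrm n X 1" using ncball_center by simp
    then show "p \<in> topspace (nc_top nrm)"
      unfolding nc_top_def topology_generated_by_topspace
      using p by (intro UnionI[of "ncball nrm n X 1"]) (auto intro!: exI[of _ n] exI[of _ X] exI[of _ "1::real"])
  qed
qed

lemma openin_ncball: "1 \<le> s \<Longrightarrow> Y \<in> mats s \<Longrightarrow> 0 < r \<Longrightarrow> openin (nc_top nrm) (ncball nrm s Y r)"
  unfolding nc_top_def by (rule topology_generated_by_Basis) auto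

end

lemma ncballI:
  "1 \<le> m \<Longrightarrow> X \<in> mats (s * m) \<Longrightarrow> nrm (s * m) (\<lambda>i j. X i j - dsum_rep s m Y i j) < r \<Longrightarrow>
    (s * m, X) \<in> ncball nrm s Y r"
  unfolding ncball_def by blast

section \<open>nc functions and the Lipschitz estimate\<close>

locale nc_map = V: op_space nrmV + W: op_space nrmW
  for nrmV :: "nat \<Rightarrow> (nat \<Rightarrow> nat \<Rightarrow> 'v::{complex_normed_vector,banach}) \<Rightarrow> real"
    and nrmW :: "nat \<Rightarrow> (nat \<Rightarrow> nat \<Rightarrow> 'w::{complex_normed_vector,banach}) \<Rightarrow> real" +
  fixes \<Omega> :: "(nat \<times> (nat \<Rightarrow> nat \<Rightarrow> 'v)) set"
    and f :: "nat \<times> (nat \<Rightarrow> nat \<Rightarrow> 'v) \<Rightarrow> nat \<times> (nat \<Rightarrow> nat \<Rightarrow> 'w)"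
  assumes nc_set: "nc_set \<Omega>" and nc_function: "nc_function \<Omega> f"
begin

lemma domain_subset_ncspace: "\<Omega> \<subseteq> ncspace"
  using nc_set unfolding nc_set_def by blast

lemma domain_memD: "(n, X) \<in> \<Omega> \<Longrightarrow> 1 \<le> n \<and> X \<in> mats n"
  using domain_subset_ncspace unfolding ncspace_def by blast

lemma f_in_ncspace: "x \<in> \<Omega> \<Longrightarrow> f x \<in> ncspace"
  using nc_function unfolding nc_function_def by (cases x) blast

lemma f_level: "(n, X) \<in> \<Omega> \<Longrightarrow> f (n, X) = (n, snd (f (n, X))) \<and> snd (f (n, X)) \<in> mats n"
proof -
  assume "(n, X) \<in> \<Omega>"
  then have "f (n, X) \<in> ncspace" "fst (f (n, X)) = n"
    using nc_function unfolding nc_function_def by blast+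
  then show ?thesis unfolding ncspace_def by (cases "f (n, X)") auto
qed

lemma dsum_mem: "(n, X) \<in> \<Omega> \<Longrightarrow> (m, Y) \<in> \<Omega> \<Longrightarrow> (n + m, dsum n m X Y) \<in> \<Omega>"
  using nc_set unfolding nc_set_def by blast

lemma f_dsum:
  "(n, X) \<in> \<Omega> \<Longrightarrow> (m, Y) \<in> \<Omega> \<Longrightarrow>
    f (n + m, dsum n m X Y) = (n + m, dsum n m (snd (f (n, X))) (snd (f (m, Y))))"
  using nc_function unfolding nc_function_def by blast

lemma f_similar:
  "S \<in> mats n \<Longrightarrow> Sinv \<in> mats n \<Longrightarrow> cmat_mult n S Sinv = cmat_id n \<Longrightarrow> cmat_mult n Sinv S = cmat_id n \<Longrightarrow>
    (n, X) \<in> \<Omega> \<Longrightarrow> (n, cmul n S X Sinv) \<in> \<Omega> \<Longrightarrow>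
    f (n, cmul n S X Sinv) = (n, cmul n S (snd (f (n, X))) Sinv)"
  using nc_function unfolding nc_function_def by blast

lemma f_dsum_rep:
  assumes Y: "(s, Y) \<in> \<Omega>" and "1 \<le> m"
  shows "(s * m, dsum_rep s m Y) \<in> \<Omega> \<and> f (s * m, dsum_rep s m Y) = (s * m, dsum_rep s m (snd (f (s, Y))))"
  using \<open>1 \<le> m\<close>
proof (induction m rule: dec_induct)
  case base
  show ?case using Y f_level[OF Y] domain_memD[OF Y] dsum_rep_1 by (metis mult_1_right)
next
  case (step m)
  have s: "1 \<le> s" using domain_memD[OF Y] by simp
  have IH: "(s * m, dsum_rep s m Y) \<in> \<Omega>" "f (s * m, dsum_rep s m Y) = (s * m, dsum_rep s m (snd (f (s, Y))))"
    using step.IH by auto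
  have "s * Suc m = s * m + s" by simp
  then show ?case
    unfolding dsum_rep_Suc[OF s] using dsum_mem[OF IH(1) Y] f_dsum[OF IH(1) Y] IH(2)
    by (simp add: add.commute)
qed

lemma f_block_ut:
  assumes X1: "(n, X1) \<in> \<Omega>" and X2: "(n, X2) \<in> \<Omega>"
    and A: "(2 * n, block_ut n X1 X2 (\<lambda>p q. c *\<^sub>C (X2 p q - X1 p q))) \<in> \<Omega>"
  shows "f (2 * n, block_ut n X1 X2 (\<lambda>p q. c *\<^sub>C (X2 p q - X1 p q))) =
    (2 * n, block_ut n (snd (f (n, X1))) (snd (f (n, X2)))
       (\<lambda>p q. c *\<^sub>C (snd (f (n, X2)) p q - snd (f (n, X1)) p q)))"
proof -
  have D: "(2 * n, dsum n n X1 X2) \<in> \<Omega>"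
    using dsum_mem[OF X1 X2] by (simp add: mult_2)
  have fD: "f (2 * n, dsum n n X1 X2) = (2 * n, dsum n n (snd (f (n, X1))) (snd (f (n, X2))))"
    using f_dsum[OF X1 X2] by (simp add: mult_2)
  have conj_X: "cmul (2 * n) (shear n c) (dsum n n X1 X2) (shear n (- c)) =
      block_ut n X1 X2 (\<lambda>p q. c *\<^sub>C (X2 p q - X1 p q))"
    using domain_memD[OF X1] domain_memD[OF X2] by (intro cmul_shear_dsum) auto
  have conj_fX: "cmul (2 * n) (shear n c) (dsum n n (snd (f (n, X1))) (snd (f (n, X2)))) (shear n (- c)) =
      block_ut n (snd (f (n, X1))) (snd (f (n, X2))) (\<lambda>p q. c *\<^sub>C (snd (f (n, X2)) p q - snd (f (n, X1)) p q))"
    using f_level[OF X1] f_level[OF X2] by (intro cmul_shear_dsum) auto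
  have "f (2 * n, cmul (2 * n) (shear n c) (dsum n n X1 X2) (shear n (- c))) =
      (2 * n, cmul (2 * n) (shear n c) (snd (f (2 * n, dsum n n X1 X2))) (shear n (- c)))"
    using A conj_X by (intro f_similar[OF mats_shear mats_shear shear_inverse D]) simp
  then show ?thesis
    using conj_X conj_fX fD by simp
qed

end

lemma (in nc_map) nrm_f_diff_le:
  assumes Y: "(s, Y) \<in> \<Omega>" and r: "0 < r" and ball: "ncball nrmV s Y r \<subseteq> \<Omega>"
    and bound: "\<And>k X. (k, X) \<in> ncball nrmV s Y r \<Longrightarrow> nrmW k (snd (f (k, X))) \<le> M"
    and m: "1 \<le> m"
    and X1: "X1 \<in> mats (s * m)" "nrmV (s * m) (\<lambda>i j. X1 i j - dsum_rep s m Y i j) < r / 2"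
    and X2: "X2 \<in> mats (s * m)" "nrmV (s * m) (\<lambda>i j. X2 i j - dsum_rep s m Y i j) < r / 2"
  shows "nrmW (s * m) (\<lambda>i j. snd (f (s * m, X1)) i j - snd (f (s * m, X2)) i j)
          \<le> 4 * M / r * nrmV (s * m) (\<lambda>i j. X1 i j - X2 i j)"
proof -
  define n where "n = s * m"
  have n: "1 \<le> n" using domain_memD[OF Y] m by (simp add: n_def)
  have "(n, X1) \<in> ncball nrmV s Y r" "(n, X2) \<in> ncball nrmV s Y r"
    unfolding n_def using m X1 X2 r by (auto intro!: ncballI)
  then have O1: "(n, X1) \<in> \<Omega>" and O2: "(n, X2) \<in> \<Omega>"
    using ball by auto
  define F1 F2 where "F1 = snd (f (n, X1))" and "F2 = snd (f (n, X2))"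
  have F: "F1 \<in> mats n" "F2 \<in> mats n" using f_level[OF O1] f_level[OF O2] by (simp_all add: F1_def F2_def)
  define \<delta> where "\<delta> = nrmV n (\<lambda>i j. X1 i j - X2 i j)"
  have X: "X1 \<in> mats n" "X2 \<in> mats n" using X1 X2 by (simp_all add: n_def)
  show ?thesis
  proof (cases "\<delta> = 0")
    case True
    then have "X1 = X2"
      using V.nrm_eq_0_imp[OF n mats_diff[OF X]] unfolding \<delta>_def by (auto simp: fun_eq_iff dest: fun_cong)
    then show ?thesis using W.nrm_zero[OF n] True by (simp add: \<delta>_def n_def)
  next
    case False
    then have \<delta>: "0 < \<delta>" using V.nrm_nonneg[OF n mats_diff[OF X]] by (simp add: \<delta>_def)
    define c where "c = complex_of_real (r / (4 * \<delta>))"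
    have c: "cmod c = r / (4 * \<delta>)" unfolding c_def norm_of_real using r \<delta> by simp
    define Ym where "Ym = dsum_rep s m Y"
    have Ym: "Ym \<in> mats n" unfolding Ym_def n_def by (rule mats_dsum_rep)
    define A where "A = block_ut n X1 X2 (\<lambda>p q. c *\<^sub>C (X2 p q - X1 p q))"
    have "dsum_rep s (m * 2) Y = dsum n n Ym Ym"
      unfolding dsum_rep_dsum_rep[OF domain_memD[OF Y, THEN conjunct1], symmetric]
      using n Ym by (simp add: dsum_rep_2 Ym_def n_def)
    then have A_diff: "(\<lambda>i j. A i j - dsum_rep s (m * 2) Y i j) =
        block_ut n (\<lambda>i j. X1 i j - Ym i j) (\<lambda>i j. X2 i j - Ym i j) (\<lambda>p q. c *\<^sub>C (X2 p q - X1 p q))"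
      by (simp add: A_def dsum_eq_block_ut block_ut_diff)
    have corner: "nrmV n (\<lambda>p q. c *\<^sub>C (X2 p q - X1 p q)) = r / 4"
      using V.nrm_scaleC[OF n mats_diff[OF X(2,1)]] V.nrm_minus_commute[OF n X] c \<delta>
      by (simp add: \<delta>_def)
    have "nrmV (2 * n) (\<lambda>i j. A i j - dsum_rep s (m * 2) Y i j) \<le>
        max (nrmV n (\<lambda>i j. X1 i j - Ym i j)) (nrmV n (\<lambda>i j. X2 i j - Ym i j))
          + nrmV n (\<lambda>p q. c *\<^sub>C (X2 p q - X1 p q))"
      unfolding A_diff using X Ym by (intro V.nrm_block_ut_le[OF n]) auto
    also have "\<dots> < r"
      using X1(2) X2(2) corner r by (simp add: Ym_def n_def max_def)
    finally have A_near: "nrmV (2 * n) (\<lambda>i j. A i j - dsum_rep s (m * 2) Y i j) < r" .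
    have size: "s * (m * 2) = 2 * n" by (simp add: n_def)
    have A_ball: "(2 * n, A) \<in> ncball nrmV s Y r"
      using ncballI[of "m * 2" A s nrmV Y r, unfolded size] m A_near
      by (simp add: A_def mats_block_ut)
    then have fA: "f (2 * n, A) = (2 * n, block_ut n F1 F2 (\<lambda>p q. c *\<^sub>C (F2 p q - F1 p q)))"
      unfolding A_def F1_def F2_def using ball by (intro f_block_ut O1 O2) auto
    have "cmod c * nrmW n (\<lambda>i j. F1 i j - F2 i j) = nrmW n (ur_block n (snd (f (2 * n, A))))"
      using W.nrm_scaleC[OF n mats_diff[OF F(2,1)]] W.nrm_minus_commute[OF n F]
      by (simp add: fA ur_block_block_ut[OF mats_scaleC[OF mats_diff[OF F(2,1)]]])
    also have "\<dots> \<le> nrmW (2 * n) (snd (f (2 * n, A)))"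
      using W.nrm_ur_block_le[OF n mats_block_ut] fA by simp
    also have "\<dots> \<le> M"
      using bound[OF A_ball] .
    finally have "cmod c * nrmW n (\<lambda>i j. F1 i j - F2 i j) \<le> M" .
    moreover have "0 < cmod c" using c r \<delta> by simp
    ultimately have "nrmW n (\<lambda>i j. F1 i j - F2 i j) \<le> M / cmod c"
      by (simp add: pos_le_divide_eq mult.commute)
    also have "M / cmod c = 4 * M / r * \<delta>"
      unfolding c using r \<delta> by (simp add: field_simps)
    finally show ?thesis by (simp add: F1_def F2_def \<delta>_def n_def)
  qed
qed

lemma (in op_space) nrm_block_ut_shift_le:
  assumes n: "n \<ge> 1" and X: "X \<in> mats n" and Z: "Z \<in> mats n"
  shows "nrm (2 * n) (\<lambda>i j. block_ut n X (\<lambda>p q. X p q + s *\<^sub>C Z p q) (\<lambda>p q. e *\<^sub>C Z p q) i j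
            - dsum_rep n 2 X i j) \<le> cmod s * nrm n Z + cmod e * nrm n Z"
proof -
  have "(\<lambda>i j. block_ut n X (\<lambda>p q. X p q + s *\<^sub>C Z p q) (\<lambda>p q. e *\<^sub>C Z p q) i j - dsum_rep n 2 X i j)
      = block_ut n (\<lambda>i j. 0) (\<lambda>p q. s *\<^sub>C Z p q) (\<lambda>p q. e *\<^sub>C Z p q)"
    using n X by (simp add: dsum_rep_2 dsum_eq_block_ut block_ut_diff)
  moreover have "nrm (2 * n) (block_ut n (\<lambda>i j. 0) (\<lambda>p q. s *\<^sub>C Z p q) (\<lambda>p q. e *\<^sub>C Z p q))
      \<le> max (nrm n (\<lambda>i j. 0)) (nrm n (\<lambda>p q. s *\<^sub>C Z p q)) + nrm n (\<lambda>p q. e *\<^sub>C Z p q)"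
    using Z by (intro nrm_block_ut_le[OF n]) auto
  ultimately show ?thesis
    using nrm_zero[OF n] nrm_scaleC[OF n Z] nrm_nonneg[OF n Z] by simp
qed

lemma (in nc_map) difference_quotient_estimate:
  assumes X: "(n, X) \<in> \<Omega>" and r: "0 < r" and ball: "ncball nrmV n X r \<subseteq> \<Omega>"
    and bound: "\<And>k Y. (k, Y) \<in> ncball nrmV n X r \<Longrightarrow> nrmW k (snd (f (k, Y))) \<le> M"
    and Z: "Z \<in> mats n" and \<epsilon>: "0 < \<epsilon>" "\<epsilon> * nrmV n Z \<le> r / 8"
    and t: "t \<noteq> 0" "cmod t * nrmV n Z < r / 4"
  defines "L \<equiv> \<lambda>i j. inverse (complex_of_real \<epsilon>) *\<^sub>C
      ur_block n (snd (f (2 * n, block_ut n X X (\<lambda>p q. complex_of_real \<epsilon> *\<^sub>C Z p q)))) i j"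
  shows "(\<lambda>i j. inverse t *\<^sub>C (snd (f (n, \<lambda>p q. X p q + t *\<^sub>C Z p q)) i j - snd (f (n, X)) i j) - L i j)
      \<in> mats n"
    and "nrmW n (\<lambda>i j. inverse t *\<^sub>C (snd (f (n, \<lambda>p q. X p q + t *\<^sub>C Z p q)) i j - snd (f (n, X)) i j) - L i j)
      \<le> 1 / \<epsilon> * (4 * M / r) * (cmod t * nrmV n Z)"
proof -
  have n: "1 \<le> n" and Xm: "X \<in> mats n" using domain_memD[OF X] by auto
  define e where "e = complex_of_real \<epsilon>"
  have e: "e \<noteq> 0" "cmod e = \<epsilon>" using \<epsilon> by (auto simp: e_def)
  define Xt where "Xt = (\<lambda>p q. X p q + t *\<^sub>C Z p q)"
  define G where "G s = block_ut n X (\<lambda>p q. X p q + s *\<^sub>C Z p q) (\<lambda>p q. e *\<^sub>C Z p q)" for s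
  have G_near: "nrmV (2 * n) (\<lambda>i j. G s i j - dsum_rep n 2 X i j) < r / 2" if "cmod s * nrmV n Z < r / 4" for s
    using V.nrm_block_ut_shift_le[OF n Xm Z, of s e, unfolded e(2)] that \<epsilon> r unfolding G_def by linarith
  have G_ball: "(2 * n, G s) \<in> ncball nrmV n X r" if "cmod s * nrmV n Z < r / 4" for s
    using ncballI[of 2 "G s" n nrmV X r, unfolded mult.commute[of n 2]] G_near[OF that] r
    by (simp add: G_def mats_block_ut)
  have Xt_ball: "(n, Xt) \<in> ncball nrmV n X r"
    using ncballI[of 1 Xt n nrmV X r, unfolded dsum_rep_1[OF Xm] mult_1_right] V.nrm_scaleC[OF n Z, of t]
      t r Xm Z by (simp add: Xt_def mats_add mats_scaleC)
  have F: "snd (f (n, X)) \<in> mats n" "snd (f (n, Xt)) \<in> mats n"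
    using f_level[OF X] f_level Xt_ball ball by auto
  have FG: "snd (f (2 * n, G s)) \<in> mats (2 * n)" if "cmod s * nrmV n Z < r / 4" for s
    using f_level G_ball[OF that] ball by blast
  have "G t = block_ut n X Xt (\<lambda>p q. (e / t) *\<^sub>C (Xt p q - X p q))"
    using t(1) by (simp add: G_def Xt_def scaleC_scaleC)
  then have "f (2 * n, G t) = (2 * n, block_ut n (snd (f (n, X))) (snd (f (n, Xt)))
      (\<lambda>p q. (e / t) *\<^sub>C (snd (f (n, Xt)) p q - snd (f (n, X)) p q)))"
    using G_ball[OF t(2)] Xt_ball ball X by (simp add: f_block_ut subset_iff)
  then have "ur_block n (snd (f (2 * n, G t))) = (\<lambda>p q. (e / t) *\<^sub>C (snd (f (n, Xt)) p q - snd (f (n, X)) p q))"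
    using ur_block_block_ut[OF mats_scaleC[OF mats_diff[OF F(2,1)]]] by simp
  moreover have "G 0 = block_ut n X X (\<lambda>p q. e *\<^sub>C Z p q)"
    by (simp add: G_def)
  moreover have "inverse e * (e / t) = inverse t"
    using e(1) by (simp add: field_simps)
  ultimately have DQ: "(\<lambda>i j. inverse t *\<^sub>C (snd (f (n, Xt)) i j - snd (f (n, X)) i j) - L i j) =
      (\<lambda>i j. inverse e *\<^sub>C ur_block n (\<lambda>a b. snd (f (2 * n, G t)) a b - snd (f (2 * n, G 0)) a b) i j)"
    unfolding ur_block_diff L_def e_def[symmetric] by (simp add: scaleC_diff_right scaleC_scaleC)
  have M: "0 \<le> M"
    using bound[OF G_ball[OF t(2)]] W.nrm_nonneg[OF _ FG[OF t(2)]] n by linarith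
  have "nrmW (2 * n) (\<lambda>a b. snd (f (2 * n, G t)) a b - snd (f (2 * n, G 0)) a b)
      \<le> 4 * M / r * nrmV (2 * n) (\<lambda>i j. G t i j - G 0 i j)"
    using nrm_f_diff_le[OF X r ball bound, of 2 "G t" "G 0", unfolded mult.commute[of n 2]]
      G_near[OF t(2)] G_near[of 0] r by (simp add: G_def mats_block_ut)
  also have "\<dots> \<le> 4 * M / r * (cmod t * nrmV n Z)"
  proof (rule mult_left_mono)
    show "nrmV (2 * n) (\<lambda>i j. G t i j - G 0 i j) \<le> cmod t * nrmV n Z"
      using V.nrm_block_ut_le[OF n mats_zero mats_scaleC[OF Z, of t] mats_zero] V.nrm_zero[OF n]
        V.nrm_scaleC[OF n Z, of t] V.nrm_nonneg[OF n Z]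
      by (simp add: G_def block_ut_diff)
  qed (use M r in simp)
  finally have Lipschitz: "nrmW (2 * n) (\<lambda>a b. snd (f (2 * n, G t)) a b - snd (f (2 * n, G 0)) a b)
      \<le> 4 * M / r * (cmod t * nrmV n Z)" .
  have "nrmW n (\<lambda>i j. inverse t *\<^sub>C (snd (f (n, Xt)) i j - snd (f (n, X)) i j) - L i j)
      = inverse \<epsilon> * nrmW n (ur_block n (\<lambda>a b. snd (f (2 * n, G t)) a b - snd (f (2 * n, G 0)) a b))"
    unfolding DQ using W.nrm_scaleC[OF n mats_ur_block] e by (simp add: norm_inverse)
  also have "\<dots> \<le> inverse \<epsilon> * nrmW (2 * n) (\<lambda>a b. snd (f (2 * n, G t)) a b - snd (f (2 * n, G 0)) a b)"
    using W.nrm_ur_block_le[OF n mats_diff[OF FG FG]] t(2) r \<epsilon> by (intro mult_left_mono) auto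
  also have "\<dots> \<le> inverse \<epsilon> * (4 * M / r * (cmod t * nrmV n Z))"
    using Lipschitz \<epsilon> by (intro mult_left_mono) auto
  finally show "nrmW n (\<lambda>i j. inverse t *\<^sub>C (snd (f (n, \<lambda>p q. X p q + t *\<^sub>C Z p q)) i j - snd (f (n, X)) i j) - L i j)
      \<le> 1 / \<epsilon> * (4 * M / r) * (cmod t * nrmV n Z)"
    by (simp add: Xt_def divide_inverse mult.assoc)
  show "(\<lambda>i j. inverse t *\<^sub>C (snd (f (n, \<lambda>p q. X p q + t *\<^sub>C Z p q)) i j - snd (f (n, X)) i j) - L i j)
      \<in> mats n"
    using F unfolding Xt_def L_def by (intro mats_diff mats_scaleC mats_ur_block)
qed

context nc_map
begin

lemma uniformly_locally_boundedE:
  assumes "uniformly_locally_bounded nrmV nrmW \<Omega> f" and "(s, Y) \<in> \<Omega>"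
  obtains r M where "0 < r" "ncball nrmV s Y r \<subseteq> \<Omega>"
    "\<And>k X. (k, X) \<in> ncball nrmV s Y r \<Longrightarrow> nrmW k (snd (f (k, X))) \<le> M"
  using assms unfolding uniformly_locally_bounded_def by blast

lemma uniformly_locally_bounded_imp_G_differentiable:
  assumes ulb: "uniformly_locally_bounded nrmV nrmW \<Omega> f"
  shows "G_differentiable nrmW \<Omega> f"
  unfolding G_differentiable_def
proof (intro allI impI)
  fix n :: nat and X Z :: "nat \<Rightarrow> nat \<Rightarrow> 'v"
  assume "(n, X) \<in> \<Omega> \<and> Z \<in> mats n"
  then have X: "(n, X) \<in> \<Omega>" and Z: "Z \<in> mats n" by auto
  obtain r M where r: "0 < r" and ball: "ncball nrmV n X r \<subseteq> \<Omega>"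
    and bound: "\<And>k Y. (k, Y) \<in> ncball nrmV n X r \<Longrightarrow> nrmW k (snd (f (k, Y))) \<le> M"
    using uniformly_locally_boundedE[OF ulb X] by blast
  have n: "1 \<le> n" using domain_memD[OF X] by simp
  define z where "z = nrmV n Z"
  have z: "0 \<le> z" unfolding z_def using V.nrm_nonneg[OF n Z] .
  define \<epsilon> where "\<epsilon> = r / (8 * (z + 1))"
  have \<epsilon>: "0 < \<epsilon>" "\<epsilon> * nrmV n Z \<le> r / 8"
    using r z by (simp_all add: \<epsilon>_def z_def[symmetric] field_simps)
  define L where "L = (\<lambda>i j. inverse (complex_of_real \<epsilon>) *\<^sub>C
      ur_block n (snd (f (2 * n, block_ut n X X (\<lambda>p q. complex_of_real \<epsilon> *\<^sub>C Z p q)))) i j)"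
  let ?DQ = "\<lambda>t. nrmW n (\<lambda>i j. inverse t *\<^sub>C (snd (f (n, \<lambda>p q. X p q + t *\<^sub>C Z p q)) i j - snd (f (n, X)) i j) - L i j)"
  have "\<forall>\<^sub>F t in at 0. norm (?DQ t) \<le> 1 / \<epsilon> * (4 * M / r) * (cmod t * z)"
    unfolding eventually_at
  proof (intro exI[of _ "r / (4 * (z + 1))"] conjI ballI impI)
    show "0 < r / (4 * (z + 1))" using r z by simp
    fix t :: complex assume "t \<noteq> 0 \<and> dist t 0 < r / (4 * (z + 1))"
    then have t: "t \<noteq> 0" "cmod t * (z + 1) < r / 4"
      using z by (simp_all add: field_simps)
    then have "cmod t * nrmV n Z < r / 4"
      using z unfolding z_def by (smt (verit) mult_left_mono norm_ge_zero)
    from difference_quotient_estimate[OF X r ball bound Z \<epsilon> t(1) this]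
    show "norm (?DQ t) \<le> 1 / \<epsilon> * (4 * M / r) * (cmod t * z)"
      using W.nrm_nonneg[OF n] by (simp add: L_def z_def)
  qed
  moreover have "((\<lambda>t::complex. 1 / \<epsilon> * (4 * M / r) * (cmod t * z))
      \<longlongrightarrow> 1 / \<epsilon> * (4 * M / r) * (cmod (0::complex) * z)) (at 0)"
    by (intro tendsto_intros)
  ultimately have "(?DQ \<longlongrightarrow> 0) (at 0)"
    by (auto intro: Lim_null_comparison)
  moreover have "L \<in> mats n"
    unfolding L_def by (intro mats_scaleC mats_ur_block)
  ultimately show "\<exists>L\<in>mats n. ((\<lambda>t. nrmW n (\<lambda>i j. inverse t *\<^sub>C
      (snd (f (n, \<lambda>p q. X p q + t *\<^sub>C Z p q)) i j - snd (f (n, X)) i j) - L i j)) \<longlongrightarrow> 0) (at 0)"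
    by blast
qed

end

context nc_map
begin

lemma uniformly_locally_bounded_imp_ncball_image:
  assumes ulb: "uniformly_locally_bounded nrmV nrmW \<Omega> f" and Y: "(s, Y) \<in> \<Omega>" and \<rho>: "0 < \<rho>"
  obtains \<delta> where "0 < \<delta>" "ncball nrmV s Y \<delta> \<subseteq> \<Omega>"
    "\<And>x. x \<in> ncball nrmV s Y \<delta> \<Longrightarrow> f x \<in> ncball nrmW s (snd (f (s, Y))) \<rho>"
proof -
  obtain r M where r: "0 < r" and ball: "ncball nrmV s Y r \<subseteq> \<Omega>"
    and bound: "\<And>k X. (k, X) \<in> ncball nrmV s Y r \<Longrightarrow> nrmW k (snd (f (k, X))) \<le> M"
    using uniformly_locally_boundedE[OF ulb Y] by blast
  have s: "1 \<le> s" and Ym: "Y \<in> mats s" using domain_memD[OF Y] by auto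
  define FY where "FY = snd (f (s, Y))"
  have "0 \<le> M"
    using bound[OF V.ncball_center[OF s Ym r]] W.nrm_nonneg[OF s] f_level[OF Y] by fastforce
  define K where "K = 4 * M / r"
  have K: "0 \<le> K" unfolding K_def using \<open>0 \<le> M\<close> r by simp
  define \<delta> where "\<delta> = min (r / 2) (\<rho> / (K + 1))"
  have \<delta>: "0 < \<delta>" "\<delta> \<le> r / 2" "K * \<delta> < \<rho>"
    using r \<rho> K by (auto simp: \<delta>_def min_def field_simps)
  have sub: "ncball nrmV s Y \<delta> \<subseteq> \<Omega>"
    using ball ncball_mono[of \<delta> r nrmV s Y] \<delta>(2) r by simp
  have "f (k, X) \<in> ncball nrmW s FY \<rho>" if X: "(k, X) \<in> ncball nrmV s Y \<delta>" for k X
  proof -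
    obtain m where m: "1 \<le> m" "k = s * m" "X \<in> mats k"
      and near: "nrmV k (\<lambda>i j. X i j - dsum_rep s m Y i j) < \<delta>"
      using X unfolding ncball_def by blast
    have k: "1 \<le> k" using m s by simp
    have rep: "f (s * m, dsum_rep s m Y) = (s * m, dsum_rep s m FY)"
      using f_dsum_rep[OF Y m(1)] by (simp add: FY_def)
    have "nrmW k (\<lambda>i j. snd (f (k, X)) i j - snd (f (s * m, dsum_rep s m Y)) i j)
        \<le> K * nrmV k (\<lambda>i j. X i j - dsum_rep s m Y i j)"
      unfolding K_def m(2)
      using nrm_f_diff_le[OF Y r ball bound m(1), of X "dsum_rep s m Y"] m near \<delta> r V.nrm_zero[OF k]
      by (simp add: mats_dsum_rep)
    also have "\<dots> \<le> K * \<delta>" using near K by (intro mult_left_mono) auto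
    finally have "nrmW k (\<lambda>i j. snd (f (k, X)) i j - dsum_rep s m FY i j) < \<rho>"
      using rep \<delta> m(2) by simp
    moreover have "(k, X) \<in> \<Omega>" using X sub by blast
    ultimately show ?thesis
      using f_level[of k X] ncballI[of m "snd (f (k, X))" s nrmW FY \<rho>] m by simp
  qed
  then show ?thesis
    using that[OF \<delta>(1) sub] by (fastforce simp: FY_def)
qed

lemma uniformly_locally_bounded_imp_nc_open_preimage:
  assumes ulb: "uniformly_locally_bounded nrmV nrmW \<Omega> f" and U: "nc_open nrmW U"
  shows "nc_open nrmV {x \<in> \<Omega>. f x \<in> U}"
  unfolding nc_open_def
proof (intro conjI allI impI)
  show "{x \<in> \<Omega>. f x \<in> U} \<subseteq> ncspace" using domain_subset_ncspace by blast
  fix s Y assume sY: "(s, Y) \<in> {x \<in> \<Omega>. f x \<in> U}"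
  then have Y: "(s, Y) \<in> \<Omega>" by simp
  then have "(s, snd (f (s, Y))) \<in> U" using sY f_level by auto
  then obtain \<rho> where "0 < \<rho>" "ncball nrmW s (snd (f (s, Y))) \<rho> \<subseteq> U"
    using U unfolding nc_open_def by blast
  then obtain \<delta> where "0 < \<delta>" "ncball nrmV s Y \<delta> \<subseteq> \<Omega>"
    "\<And>x. x \<in> ncball nrmV s Y \<delta> \<Longrightarrow> f x \<in> ncball nrmW s (snd (f (s, Y))) \<rho>"
    using uniformly_locally_bounded_imp_ncball_image[OF ulb Y] by metis
  then show "\<exists>\<delta>>0. ncball nrmV s Y \<delta> \<subseteq> {x \<in> \<Omega>. f x \<in> U}"
    using \<open>ncball nrmW s (snd (f (s, Y))) \<rho> \<subseteq> U\<close> by blast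
qed

lemma nc_open_preimage_imp_uniformly_locally_bounded:
  assumes preimage: "\<And>U. nc_open nrmW U \<Longrightarrow> nc_open nrmV {x \<in> \<Omega>. f x \<in> U}"
  shows "uniformly_locally_bounded nrmV nrmW \<Omega> f"
  unfolding uniformly_locally_bounded_def
proof (intro allI impI)
  fix s Y assume Y: "(s, Y) \<in> \<Omega>"
  have s: "1 \<le> s" using domain_memD[OF Y] by simp
  define FY where "FY = snd (f (s, Y))"
  have FY: "f (s, Y) = (s, FY)" "FY \<in> mats s" using f_level[OF Y] by (simp_all add: FY_def)
  define P where "P = {x \<in> \<Omega>. f x \<in> ncball nrmW s FY 1}"
  have "nc_open nrmV P"
    unfolding P_def using W.openin_ncball[OF s FY(2)] W.openin_nc_top_iff by (intro preimage) simp
  moreover have "(s, Y) \<in> P"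
    unfolding P_def using Y FY W.ncball_center[OF s FY(2)] by simp
  ultimately obtain r where r: "0 < r" "ncball nrmV s Y r \<subseteq> P"
    unfolding nc_open_def by blast
  have "nrmW k (snd (f (k, X))) \<le> 1 + nrmW s FY" if "(k, X) \<in> ncball nrmV s Y r" for k X
  proof -
    have kX: "(k, X) \<in> \<Omega>" "f (k, X) \<in> ncball nrmW s FY 1" using that r(2) by (auto simp: P_def)
    then obtain m where m: "1 \<le> m" "k = s * m"
      and near: "nrmW k (\<lambda>i j. snd (f (k, X)) i j - dsum_rep s m FY i j) < 1"
      using f_level[OF kX(1)] unfolding ncball_def by auto
    have k: "1 \<le> k" using m s by simp
    have "nrmW k (snd (f (k, X))) \<le> nrmW k (\<lambda>i j. snd (f (k, X)) i j - dsum_rep s m FY i j) + nrmW k (dsum_rep s m FY)"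
      using f_level[OF kX(1)] m(2) by (intro W.nrm_le_diff_add[OF k]) auto
    also have "nrmW k (dsum_rep s m FY) = nrmW s FY"
      unfolding m(2) by (rule W.nrm_dsum_rep[OF s m(1) FY(2)])
    finally show ?thesis using near by simp
  qed
  then show "\<exists>r>0. ncball nrmV s Y r \<subseteq> \<Omega> \<and>
      (\<exists>M. \<forall>k X. (k, X) \<in> ncball nrmV s Y r \<longrightarrow> nrmW k (snd (f (k, X))) \<le> M)"
    using r P_def by blast
qed

lemma continuous_map_iff_nc_open_preimage:
  assumes \<Omega>: "openin (nc_top nrmV) \<Omega>"
  shows "continuous_map (subtopology (nc_top nrmV) \<Omega>) (subtopology (nc_top nrmW) ncspace) f \<longleftrightarrow>
    (\<forall>U. nc_open nrmW U \<longrightarrow> nc_open nrmV {x \<in> \<Omega>. f x \<in> U})"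
proof -
  have dom: "topspace (subtopology (nc_top nrmV) \<Omega>) = \<Omega>"
    using V.topspace_nc_top domain_subset_ncspace by auto
  have cod: "subtopology (nc_top nrmW) ncspace = nc_top nrmW"
    using W.topspace_nc_top subtopology_topspace by metis
  show ?thesis
    unfolding cod dom continuous_map_def openin_open_subtopology[OF \<Omega>] V.openin_nc_top_iff
      W.openin_nc_top_iff W.topspace_nc_top
    using f_in_ncspace by auto
qed

end

theorem corollary7p28:
  fixes nrmV :: "nat \<Rightarrow> (nat \<Rightarrow> nat \<Rightarrow> 'v::{complex_normed_vector,banach}) \<Rightarrow> real"
    and nrmW :: "nat \<Rightarrow> (nat \<Rightarrow> nat \<Rightarrow> 'w::{complex_normed_vector,banach}) \<Rightarrow> real"
    and \<Omega> :: "(nat \<times> (nat \<Rightarrow> nat \<Rightarrow> 'v)) set"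
    and f :: "nat \<times> (nat \<Rightarrow> nat \<Rightarrow> 'v) \<Rightarrow> nat \<times> (nat \<Rightarrow> nat \<Rightarrow> 'w)"
  assumes "operator_space nrmV" and "operator_space nrmW"
    and "nc_set \<Omega>" and "openin (nc_top nrmV) \<Omega>"
    and "nc_function \<Omega> f"
  shows "(uniformly_locally_bounded nrmV nrmW \<Omega> f \<longleftrightarrow>
            continuous_map (subtopology (nc_top nrmV) \<Omega>) (subtopology (nc_top nrmW) ncspace) f)
       \<and> (uniformly_locally_bounded nrmV nrmW \<Omega> f \<longleftrightarrow> uniformly_analytic nrmV nrmW \<Omega> f)"
proof -
  interpret nc_map nrmV nrmW \<Omega> f
    using assms by unfold_locales
  show ?thesis
    unfolding continuous_map_iff_nc_open_preimage[OF assms(4)] uniformly_analytic_def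
    using uniformly_locally_bounded_imp_nc_open_preimage nc_open_preimage_imp_uniformly_locally_bounded
      uniformly_locally_bounded_imp_G_differentiable by blast
qed

end
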